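(* The equivalence relation $E^0_=$ (also known as $=^{ce}$) is complete amongst the $\Pi^0_2$ equivalence relations on $\omega$ with respect to finitary reducibility: for every $\Pi^0_2$ equivalence relation $R$ on $\omega$, $R$ is finitarily reducible to $E^0_=$.
   Context: Let $W_e$ denote the $e$-th computably enumerable set under a standard indexing. The equivalence relation $E^0_=$ on $\omega$ is defined by $i~E^0_=~j$ iff $W_i=W_j$; it is a $\Pi^0_2$ equivalence relation. For equivalence relations $E,F$ on $\omega$ and $n\geq 1$, $E$ is $n$-arily reducible to $F$ if there is a total computable function $f$ taking each $n$-tuple $(x_0,\ldots,x_{n-1})$ to an $n$-tuple $(y_0,\ldots,y_{n-1})$ such that for all $i<j<n$, $x_i~E~x_j$ iff $y_i~F~y_j$. $E$ is finitarily reducible to $F$ if such $n$-ary reductions exist uniformly for all $n\in\omega$, i.e., there is a single total computable function $f(n,i,\vec{x})$ such that for each $n$, $f(n,-,-)$ is an $n$-ary reduction from $E$ to $F$. *)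

theory Defs
  imports Main "HOL-Library.Nat_Bijection"
begin

text \<open>A concrete model of partial recursive functions: unary functions on nat,
  with multiple arguments coded by Cantor pairing (prod_encode).\<close>

datatype recf =
    Zero
  | Succ
  | Fst
  | Snd
  | Comp recf recf
  | Pair recf recf
  | Rec recf recf
  | Mu recf

inductive eval :: "recf \<Rightarrow> nat \<Rightarrow> nat \<Rightarrow> bool" where
  "eval Zero x 0"
| "eval Succ x (Suc x)"
| "eval Fst x (fst (prod_decode x))"
| "eval Snd x (snd (prod_decode x))"
| "eval g x y \<Longrightarrow> eval f y z \<Longrightarrow> eval (Comp f g) x z"
| "eval f x a \<Longrightarrow> eval g x b \<Longrightarrow> eval (Pair f g) x (prod_encode (a, b))"
| "eval f x y \<Longrightarrow> eval (Rec f g) (prod_encode (x, 0)) y"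
| "eval (Rec f g) (prod_encode (x, n)) y \<Longrightarrow>
   eval g (prod_encode (x, prod_encode (n, y))) z \<Longrightarrow>
   eval (Rec f g) (prod_encode (x, Suc n)) z"
| "eval f (prod_encode (x, n)) 0 \<Longrightarrow>
   (\<forall>m<n. \<exists>k. eval f (prod_encode (x, m)) (Suc k)) \<Longrightarrow>
   eval (Mu f) x n"

lemma fst_prod_decode_le: "fst (prod_decode m) \<le> m"
  by (metis le_prod_encode_1 prod.collapse prod_decode_inverse)

lemma snd_prod_decode_le: "snd (prod_decode m) \<le> m"
  by (metis le_prod_encode_2 prod.collapse prod_decode_inverse)

function decode :: "nat \<Rightarrow> recf" where
  "decode n =
    (let m = n div 8; a = fst (prod_decode m); b = snd (prod_decode m) in
     if n mod 8 = 0 then Zero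
     else if n mod 8 = 1 then Succ
     else if n mod 8 = 2 then Fst
     else if n mod 8 = 3 then Snd
     else if n mod 8 = 4 then Comp (decode a) (decode b)
     else if n mod 8 = 5 then Pair (decode a) (decode b)
     else if n mod 8 = 6 then Rec (decode a) (decode b)
     else Mu (decode m))"
  by auto
lemma decode_lt: "n div 8 < n" if "n mod 8 \<noteq> 0" for n :: nat
  using that by (cases "n = 0") auto

lemma decode_lta: "fst (prod_decode (n div 8)) < n" if "n mod 8 \<noteq> 0" for n :: nat
  using decode_lt[OF that] fst_prod_decode_le[of "n div 8"] by linarith

lemma decode_ltb: "snd (prod_decode (n div 8)) < n" if "n mod 8 \<noteq> 0" for n :: nat
  using decode_lt[OF that] snd_prod_decode_le[of "n div 8"] by linarith

termination
  by (relation "measure id") (use decode_lt decode_lta decode_ltb in auto)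

definition phi :: "nat \<Rightarrow> nat \<Rightarrow> nat \<Rightarrow> bool" where
  "phi e x y \<longleftrightarrow> eval (decode e) x y"

definition W :: "nat \<Rightarrow> nat set" where
  "W e = {x. \<exists>y. phi e x y}"

definition ceq :: "nat \<Rightarrow> nat \<Rightarrow> bool" where
  "ceq i j \<longleftrightarrow> W i = W j"

definition decidable_pred :: "(nat \<Rightarrow> bool) \<Rightarrow> bool" where
  "decidable_pred P \<longleftrightarrow> (\<exists>e. \<forall>x. phi e x (if P x then 1 else 0))"

definition pi02 :: "(nat \<Rightarrow> nat \<Rightarrow> bool) \<Rightarrow> bool" where
  "pi02 R \<longleftrightarrow> (\<exists>P. decidable_pred P \<and>
     (\<forall>x y. R x y \<longleftrightarrow> (\<forall>a. \<exists>b. P (prod_encode (prod_encode (x, y), prod_encode (a, b))))))"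

definition computable3 :: "(nat \<Rightarrow> nat \<Rightarrow> nat list \<Rightarrow> nat) \<Rightarrow> bool" where
  "computable3 f \<longleftrightarrow>
     (\<exists>e. \<forall>n i xs. phi e (prod_encode (n, prod_encode (i, list_encode xs))) (f n i xs))"

definition finitarily_reducible :: "(nat \<Rightarrow> nat \<Rightarrow> bool) \<Rightarrow> (nat \<Rightarrow> nat \<Rightarrow> bool) \<Rightarrow> bool" where
  "finitarily_reducible E F \<longleftrightarrow>
     (\<exists>f. computable3 f \<and>
        (\<forall>n xs. length xs = n \<longrightarrow>
           (\<forall>i j. i < j \<and> j < n \<longrightarrow> (E (xs ! i) (xs ! j) \<longleftrightarrow> F (f n i xs) (f n j xs)))))"

end

theory Submission
  imports Defs
begin

text \<open>Let R x y \<longleftrightarrow> (\<forall>a. \<exists>b. P \<langle>\<langle>x, y\<rangle>, \<langle>a, b\<rangle>\<rangle>) with P decidable, and fix a tuple xs with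
  all entries at most N. Call u \<rightarrow> z a k-edge if z \<le> N and
  \<forall>a<k. \<exists>b. P \<langle>\<langle>u, z\<rangle>, \<langle>a, b\<rangle>\<rangle>. The reduction sends xs ! i to an index of the c.e. set
  of all \<langle>y, k\<rangle> such that y is reachable from xs ! i along k-edges. If R relates xs ! i
  and xs ! j, each is joined to the other by a k-edge for every k, so the two sets coincide.
  Otherwise, since only the finitely many pairs below N matter, some single K
  already refutes every non-R pair below N; then every path of K-edges from xs ! j stays in the
  R-class of xs ! j, so \<langle>xs ! i, K\<rangle> lies in the set for i but not in the set for j.\<close>

abbreviation cpair :: "nat \<Rightarrow> nat \<Rightarrow> nat" (\<open>\<langle>_,/ _\<rangle>\<close>) where
  "\<langle>a, b\<rangle> \<equiv> prod_encode (a, b)"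

definition cfst :: "nat \<Rightarrow> nat" where "cfst w = fst (prod_decode w)"
definition csnd :: "nat \<Rightarrow> nat" where "csnd w = snd (prod_decode w)"

lemma cfst_cpair [simp]: "cfst \<langle>a, b\<rangle> = a"
  by (simp add: cfst_def)

lemma csnd_cpair [simp]: "csnd \<langle>a, b\<rangle> = b"
  by (simp add: csnd_def)

lemma cpair_cfst_csnd [simp]: "\<langle>cfst w, csnd w\<rangle> = w"
  by (simp add: cfst_def csnd_def)

lemma Collect_cpair_eq_iff:
  "{x. A (cfst x) (csnd x)} = {x. B (cfst x) (csnd x)} \<longleftrightarrow> (\<forall>y k. A y k \<longleftrightarrow> B y k)"
proof
  assume eq: "{x. A (cfst x) (csnd x)} = {x. B (cfst x) (csnd x)}"
  show "\<forall>y k. A y k \<longleftrightarrow> B y k"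
  proof (intro allI)
    fix y k
    from eq have "\<langle>y, k\<rangle> \<in> {x. A (cfst x) (csnd x)} \<longleftrightarrow> \<langle>y, k\<rangle> \<in> {x. B (cfst x) (csnd x)}"
      by simp
    then show "A y k \<longleftrightarrow> B y k" by simp
  qed
qed simp

section \<open>Evaluation and computed functions\<close>

inductive_cases eval_ZeroE: "eval Zero x y"
inductive_cases eval_SuccE: "eval Succ x y"
inductive_cases eval_FstE: "eval Fst x y"
inductive_cases eval_SndE: "eval Snd x y"
inductive_cases eval_CompE: "eval (Comp f g) x y"
inductive_cases eval_PairE: "eval (Pair f g) x y"
inductive_cases eval_RecE: "eval (Rec f g) x y"
inductive_cases eval_MuE: "eval (Mu f) x y"

lemma eval_Rec_deterministic:
  assumes f_det: "\<And>x y y'. eval f x y \<Longrightarrow> eval f x y' \<Longrightarrow> y' = y"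
    and g_det: "\<And>x y y'. eval g x y \<Longrightarrow> eval g x y' \<Longrightarrow> y' = y"
  shows "eval (Rec f g) \<langle>x, n\<rangle> y \<Longrightarrow> eval (Rec f g) \<langle>x, n\<rangle> y' \<Longrightarrow> y' = y"
proof (induction n arbitrary: y y')
  case 0
  from 0(1) have "eval f x y" by (cases rule: eval_RecE) auto
  moreover from 0(2) have "eval f x y'" by (cases rule: eval_RecE) auto
  ultimately show ?case by (rule f_det)
next
  case (Suc n)
  from Suc.prems(1) obtain a where "eval (Rec f g) \<langle>x, n\<rangle> a" "eval g \<langle>x, \<langle>n, a\<rangle>\<rangle> y"
    by (cases rule: eval_RecE) auto
  moreover from Suc.prems(2) obtain a' where "eval (Rec f g) \<langle>x, n\<rangle> a'" "eval g \<langle>x, \<langle>n, a'\<rangle>\<rangle> y'"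
    by (cases rule: eval_RecE) auto
  ultimately show ?case using Suc.IH g_det by blast
qed

lemma eval_deterministic: "eval p x y \<Longrightarrow> eval p x y' \<Longrightarrow> y' = y"
proof (induction p arbitrary: x y y')
  case (Comp f g)
  then show ?case by (blast elim: eval_CompE)
next
  case (Pair f g)
  then show ?case by (elim eval_PairE) auto
next
  case (Rec f g)
  then show ?case using eval_Rec_deterministic[of f g "cfst x" "csnd x" y y'] by simp
next
  case (Mu f)
  from Mu.prems have y: "eval f \<langle>x, y\<rangle> 0" "\<forall>m<y. \<exists>k. eval f \<langle>x, m\<rangle> (Suc k)"
    and y': "eval f \<langle>x, y'\<rangle> 0" "\<forall>m<y'. \<exists>k. eval f \<langle>x, m\<rangle> (Suc k)"
    by (auto elim!: eval_MuE)
  have no_earlier_zero: False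
    if "m < n" "eval f \<langle>x, m\<rangle> 0" "\<forall>m<n. \<exists>k. eval f \<langle>x, m\<rangle> (Suc k)" for m n
  proof -
    from that(1,3) obtain k where "eval f \<langle>x, m\<rangle> (Suc k)" by blast
    from Mu.IH[OF that(2) this] show False by simp
  qed
  show ?case using no_earlier_zero[OF _ y(1) y'(2)] no_earlier_zero[OF _ y'(1) y(2)]
    by (cases y y' rule: linorder_cases) auto
qed (auto elim: eval_ZeroE eval_SuccE eval_FstE eval_SndE)

definition computes :: "recf \<Rightarrow> (nat \<Rightarrow> nat) \<Rightarrow> bool" where
  "computes p F \<longleftrightarrow> (\<forall>x. eval p x (F x))"

lemma computes_eval_iff: "computes p F \<Longrightarrow> eval p x y \<longleftrightarrow> y = F x"
  unfolding computes_def using eval_deterministic by blast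

lemma computes_cong: "computes p F \<Longrightarrow> (\<And>x. F x = G x) \<Longrightarrow> computes p G"
  unfolding computes_def by simp

lemma computes_Zero: "computes Zero (\<lambda>_. 0)"
  and computes_Succ: "computes Succ Suc"
  and computes_Fst: "computes Fst cfst"
  and computes_Snd: "computes Snd csnd"
  unfolding computes_def cfst_def csnd_def by (auto intro: eval.intros)

lemma computes_Comp: "computes f F \<Longrightarrow> computes g G \<Longrightarrow> computes (Comp f g) (\<lambda>x. F (G x))"
  and computes_Pair: "computes f F \<Longrightarrow> computes g G \<Longrightarrow> computes (Pair f g) (\<lambda>x. \<langle>F x, G x\<rangle>)"
  unfolding computes_def by (auto intro: eval.intros)

primrec prim_rec :: "(nat \<Rightarrow> nat) \<Rightarrow> (nat \<Rightarrow> nat) \<Rightarrow> nat \<Rightarrow> nat \<Rightarrow> nat" where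
  "prim_rec F G x 0 = F x"
| "prim_rec F G x (Suc n) = G \<langle>x, \<langle>n, prim_rec F G x n\<rangle>\<rangle>"

lemma computes_Rec:
  assumes "computes f F" "computes g G"
  shows "computes (Rec f g) (\<lambda>z. prim_rec F G (cfst z) (csnd z))"
proof -
  have "eval (Rec f g) \<langle>x, n\<rangle> (prim_rec F G x n)" for x n
    using assms by (induction n) (auto simp: computes_def intro: eval.intros)
  then have "eval (Rec f g) \<langle>cfst z, csnd z\<rangle> (prim_rec F G (cfst z) (csnd z))" for z .
  then show ?thesis unfolding computes_def by simp
qed

lemma eval_Mu_defined_iff:
  assumes "computes f F"
  shows "(\<exists>y. eval (Mu f) x y) \<longleftrightarrow> (\<exists>n. F \<langle>x, n\<rangle> = 0)"
proof
  assume "\<exists>y. eval (Mu f) x y"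
  then show "\<exists>n. F \<langle>x, n\<rangle> = 0" using assms by (auto elim!: eval_MuE simp: computes_eval_iff)
next
  assume "\<exists>n. F \<langle>x, n\<rangle> = 0"
  define n where "n = (LEAST n. F \<langle>x, n\<rangle> = 0)"
  have "F \<langle>x, n\<rangle> = 0" unfolding n_def by (rule LeastI_ex) fact
  then have "eval f \<langle>x, n\<rangle> 0" using assms by (simp add: computes_eval_iff)
  moreover have "\<exists>k. eval f \<langle>x, m\<rangle> (Suc k)" if "m < n" for m
  proof -
    have "F \<langle>x, m\<rangle> \<noteq> 0" using that not_less_Least unfolding n_def by blast
    then obtain k where "F \<langle>x, m\<rangle> = Suc k" using not0_implies_Suc by blast
    then show ?thesis using assms by (auto simp: computes_eval_iff)
  qed
  ultimately show "\<exists>y. eval (Mu f) x y" by (blast intro: eval.intros(9))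
qed

section \<open>A library of programs\<close>

definition id_prog :: recf where "id_prog = Pair Fst Snd"

lemma computes_id_prog: "computes id_prog (\<lambda>x. x)"
  unfolding id_prog_def by (rule computes_cong, (rule computes_Pair computes_Fst computes_Snd)+) simp

primrec const_prog :: "nat \<Rightarrow> recf" where
  "const_prog 0 = Zero"
| "const_prog (Suc c) = Comp Succ (const_prog c)"

lemma computes_const_prog: "computes (const_prog c) (\<lambda>_. c)"
  by (induction c) (auto intro: computes_Zero computes_cong[OF computes_Comp[OF computes_Succ]])

lemmas computes_basic = computes_Zero computes_Succ computes_Fst computes_Snd computes_Comp
  computes_Pair computes_Rec computes_id_prog computes_const_prog

definition plus_prog :: "recf \<Rightarrow> recf \<Rightarrow> recf" where
  "plus_prog p q = Comp (Rec id_prog (Comp Succ (Comp Snd Snd))) (Pair p q)"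

lemma computes_plus_prog:
  assumes "computes p P" "computes q Q"
  shows "computes (plus_prog p q) (\<lambda>x. P x + Q x)"
proof -
  have rec: "prim_rec (\<lambda>x. x) (\<lambda>w. Suc (csnd (csnd w))) x n = x + n" for x n
    by (induction n) auto
  show ?thesis unfolding plus_prog_def
    by (rule computes_cong, (rule computes_basic assms)+) (simp add: rec)
qed

definition pred_prog :: recf where
  "pred_prog = Comp (Rec Zero (Comp Fst Snd)) (Pair Zero id_prog)"

lemma computes_pred_prog: "computes pred_prog (\<lambda>x. x - 1)"
proof -
  have rec: "prim_rec (\<lambda>x. 0) (\<lambda>w. cfst (csnd w)) x n = n - 1" for x n
    by (induction n) auto
  show ?thesis unfolding pred_prog_def
    by (rule computes_cong, (rule computes_basic)+) (simp add: rec)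
qed

definition minus_prog :: "recf \<Rightarrow> recf \<Rightarrow> recf" where
  "minus_prog p q = Comp (Rec id_prog (Comp pred_prog (Comp Snd Snd))) (Pair p q)"

lemma computes_minus_prog:
  assumes "computes p P" "computes q Q"
  shows "computes (minus_prog p q) (\<lambda>x. P x - Q x)"
proof -
  have rec: "prim_rec (\<lambda>x. x) (\<lambda>w. csnd (csnd w) - Suc 0) x n = x - n" for x n
    by (induction n) auto
  show ?thesis unfolding minus_prog_def
    by (rule computes_cong, (rule computes_basic computes_pred_prog assms)+) (simp add: rec)
qed

definition if_zero_prog :: "recf \<Rightarrow> recf \<Rightarrow> recf \<Rightarrow> recf" where
  "if_zero_prog p f g = Comp (Rec f (Comp g Fst)) (Pair id_prog p)"

lemma computes_if_zero_prog:
  assumes "computes p P" "computes f F" "computes g G"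
  shows "computes (if_zero_prog p f g) (\<lambda>x. if P x = 0 then F x else G x)"
proof -
  have rec: "prim_rec F (\<lambda>w. G (cfst w)) x n = (if n = 0 then F x else G x)" for x n
    by (cases n) auto
  show ?thesis unfolding if_zero_prog_def
    by (rule computes_cong, (rule computes_basic assms)+) (simp add: rec)
qed

definition not_prog :: "recf \<Rightarrow> recf" where
  "not_prog p = if_zero_prog p (const_prog 1) Zero"

lemma computes_not_prog: "computes p P \<Longrightarrow> computes (not_prog p) (\<lambda>x. of_bool (P x = 0))"
  unfolding not_prog_def
  by (rule computes_cong, (rule computes_if_zero_prog computes_basic | assumption)+) simp

definition eq_prog :: "recf \<Rightarrow> recf \<Rightarrow> recf" where
  "eq_prog p q = not_prog (plus_prog (minus_prog p q) (minus_prog q p))"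

lemma computes_eq_prog:
  "computes p P \<Longrightarrow> computes q Q \<Longrightarrow> computes (eq_prog p q) (\<lambda>x. of_bool (P x = Q x))"
  unfolding eq_prog_def
  by (rule computes_cong, (rule computes_not_prog computes_plus_prog computes_minus_prog
      | assumption)+) auto

definition sum_prog :: "recf \<Rightarrow> recf" where
  "sum_prog q = Rec Zero (plus_prog (Comp Snd Snd) (Comp q (Pair Fst (Comp Fst Snd))))"

lemma computes_sum_prog:
  assumes "computes q Q"
  shows "computes (sum_prog q) (\<lambda>z. \<Sum>m<csnd z. Q \<langle>cfst z, m\<rangle>)"
proof -
  have rec: "prim_rec (\<lambda>x. 0) (\<lambda>w. csnd (csnd w) + Q \<langle>cfst w, cfst (csnd w)\<rangle>) x n
      = (\<Sum>m<n. Q \<langle>x, m\<rangle>)" for x n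
    by (induction n) auto
  show ?thesis unfolding sum_prog_def
    by (rule computes_cong, (rule computes_basic computes_plus_prog assms)+) (simp add: rec)
qed

definition iterate_prog :: "recf \<Rightarrow> recf" where
  "iterate_prog s = Rec id_prog (Comp s (Comp Snd Snd))"

lemma computes_iterate_prog:
  assumes "computes s S"
  shows "computes (iterate_prog s) (\<lambda>z. (S ^^ csnd z) (cfst z))"
proof -
  have rec: "prim_rec (\<lambda>x. x) (\<lambda>w. S (csnd (csnd w))) x n = (S ^^ n) x" for x n
    by (induction n) auto
  show ?thesis unfolding iterate_prog_def
    by (rule computes_cong, (rule computes_basic assms)+) (simp add: rec)
qed

definition param_iterate_prog :: "recf \<Rightarrow> recf" where
  "param_iterate_prog s = Rec Snd (Comp s (Pair (Comp Fst Fst) (Comp Snd Snd)))"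

lemma computes_param_iterate_prog:
  assumes "computes s S"
  shows "computes (param_iterate_prog s)
    (\<lambda>z. ((\<lambda>st. S \<langle>cfst (cfst z), st\<rangle>) ^^ csnd z) (csnd (cfst z)))"
proof -
  have rec: "prim_rec csnd (\<lambda>w. S \<langle>cfst (cfst w), csnd (csnd w)\<rangle>) x n
      = ((\<lambda>st. S \<langle>cfst x, st\<rangle>) ^^ n) (csnd x)" for x n
    by (induction n) auto
  show ?thesis unfolding param_iterate_prog_def
    by (rule computes_cong, (rule computes_basic assms)+) (simp add: rec)
qed

section \<open>Goedel numbering and the s-m-n construction\<close>

fun encode :: "recf \<Rightarrow> nat" where
  "encode Zero = 0"
| "encode Succ = 1"
| "encode Fst = 2"
| "encode Snd = 3"
| "encode (Comp f g) = 4 + 8 * \<langle>encode f, encode g\<rangle>"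
| "encode (Pair f g) = 5 + 8 * \<langle>encode f, encode g\<rangle>"
| "encode (Rec f g) = 6 + 8 * \<langle>encode f, encode g\<rangle>"
| "encode (Mu f) = 7 + 8 * encode f"

declare decode.simps [simp del]

lemma decode_encode [simp]: "decode (encode p) = p"
  by (induction p) (subst decode.simps, simp add: Let_def)+

definition triangle_prog :: recf where
  "triangle_prog = Comp (Rec Zero (plus_prog (Comp Snd Snd) (Comp Succ (Comp Fst Snd))))
     (Pair Zero id_prog)"

lemma computes_triangle_prog: "computes triangle_prog triangle"
proof -
  have rec: "prim_rec (\<lambda>x. 0) (\<lambda>w. Suc (csnd (csnd w) + cfst (csnd w))) x n = triangle n" for x n
    by (induction n) auto
  show ?thesis unfolding triangle_prog_def
    by (rule computes_cong, (rule computes_basic computes_plus_prog)+) (simp add: rec)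
qed

definition cpair_prog :: "recf \<Rightarrow> recf \<Rightarrow> recf" where
  "cpair_prog p q = plus_prog (Comp triangle_prog (plus_prog p q)) p"

lemma computes_cpair_prog:
  "computes p P \<Longrightarrow> computes q Q \<Longrightarrow> computes (cpair_prog p q) (\<lambda>x. \<langle>P x, Q x\<rangle>)"
  unfolding cpair_prog_def
  by (rule computes_cong, (rule computes_plus_prog computes_triangle_prog computes_basic
      | assumption)+) (simp add: prod_encode_def)

text \<open>In the numbering decode, j + 8 \<langle>a, b\<rangle> codes the compound program with tag j and
  components coded by a and b.\<close>

definition code_prog :: "nat \<Rightarrow> recf \<Rightarrow> recf \<Rightarrow> recf" where
  "code_prog j p q = (let c2 = plus_prog (cpair_prog p q) (cpair_prog p q); c4 = plus_prog c2 c2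
     in plus_prog (const_prog j) (plus_prog c4 c4))"

lemma computes_code_prog:
  "computes p P \<Longrightarrow> computes q Q \<Longrightarrow> computes (code_prog j p q) (\<lambda>x. j + 8 * \<langle>P x, Q x\<rangle>)"
  unfolding code_prog_def Let_def
  by (rule computes_cong, (rule computes_plus_prog computes_cpair_prog computes_basic
      | assumption)+) simp

lemma encode_const_prog_funpow: "encode (const_prog c) = ((\<lambda>y. 4 + 8 * \<langle>1, y\<rangle>) ^^ c) 0"
  by (induction c) auto

definition code_of_const_prog :: recf where
  "code_of_const_prog = Comp (iterate_prog (code_prog 4 (const_prog 1) id_prog)) (Pair Zero id_prog)"

lemma computes_code_of_const_prog: "computes code_of_const_prog (\<lambda>c. encode (const_prog c))"
  unfolding code_of_const_prog_def encode_const_prog_funpow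
  by (rule computes_cong, (rule computes_iterate_prog computes_code_prog computes_basic)+) simp

text \<open>Fixing the first argument of U at c, as in the s-m-n theorem.\<close>

definition smn_index :: "recf \<Rightarrow> nat \<Rightarrow> nat" where
  "smn_index U c = encode (Comp U (Pair (const_prog c) id_prog))"

definition smn_prog :: "recf \<Rightarrow> recf" where
  "smn_prog U = code_prog 4 (const_prog (encode U))
     (code_prog 5 code_of_const_prog (const_prog (encode id_prog)))"

lemma computes_smn_prog: "computes (smn_prog U) (smn_index U)"
  unfolding smn_prog_def smn_index_def
  by (rule computes_cong, (rule computes_code_prog computes_code_of_const_prog computes_basic)+) simp

lemma W_smn_index: "W (smn_index U c) = {x. \<exists>y. eval U \<langle>c, x\<rangle> y}"
proof -
  have "computes (Pair (const_prog c) id_prog) (\<lambda>x. \<langle>c, x\<rangle>)"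
    by (rule computes_cong, (rule computes_basic)+) simp
  then have "eval (Comp U (Pair (const_prog c) id_prog)) x y \<longleftrightarrow> eval U \<langle>c, x\<rangle> y" for x y
    by (auto elim: eval_CompE intro: eval.intros simp: computes_eval_iff)
  then show ?thesis unfolding W_def phi_def smn_index_def decode_encode by blast
qed

section \<open>Chains along approximations of a Pi-0-2 relation\<close>

fun is_chain :: "('a \<Rightarrow> 'a \<Rightarrow> bool) \<Rightarrow> 'a \<Rightarrow> 'a list \<Rightarrow> bool" where
  "is_chain S u [] \<longleftrightarrow> True"
| "is_chain S u (z # zs) \<longleftrightarrow> S u z \<and> is_chain S z zs"

lemma rtranclp_iff_is_chain: "S\<^sup>*\<^sup>* u y \<longleftrightarrow> (\<exists>zs. is_chain S u zs \<and> last (u # zs) = y)"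
proof
  show "S\<^sup>*\<^sup>* u y \<Longrightarrow> \<exists>zs. is_chain S u zs \<and> last (u # zs) = y"
  proof (induction rule: converse_rtranclp_induct)
    case base
    show ?case by (intro exI[of _ "[]"]) simp
  next
    case (step u v)
    then obtain zs where "is_chain S v zs" "last (v # zs) = y" by blast
    with step.hyps(1) show ?case by (intro exI[of _ "v # zs"]) simp
  qed
next
  have "is_chain S u zs \<Longrightarrow> S\<^sup>*\<^sup>* u (last (u # zs))" for zs
    by (induction zs arbitrary: u) (auto intro: converse_rtranclp_into_rtranclp)
  then show "\<exists>zs. is_chain S u zs \<and> last (u # zs) = y \<Longrightarrow> S\<^sup>*\<^sup>* u y" by blast
qed

lemma is_chain_mono: "is_chain S u zs \<Longrightarrow> (\<And>u z. S u z \<Longrightarrow> S' u z) \<Longrightarrow> is_chain S' u zs"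
  by (induction zs arbitrary: u) auto

lemma is_chain_Ex_mono:
  assumes mono: "\<And>B B' u z. S B u z \<Longrightarrow> B \<le> B' \<Longrightarrow> S B' u z"
  shows "is_chain (\<lambda>u z. \<exists>B::nat. S B u z) u zs \<longleftrightarrow> (\<exists>B. is_chain (S B) u zs)"
proof
  show "is_chain (\<lambda>u z. \<exists>B. S B u z) u zs \<Longrightarrow> \<exists>B. is_chain (S B) u zs"
  proof (induction zs arbitrary: u)
    case (Cons z zs)
    then obtain B1 where B1: "S B1 u z" and "is_chain (\<lambda>u z. \<exists>B. S B u z) z zs" by auto
    with Cons.IH obtain B2 where B2: "is_chain (S B2) z zs" by blast
    have "S (max B1 B2) u z" using mono[OF B1] by simp
    moreover have "is_chain (S (max B1 B2)) z zs"
      using is_chain_mono[OF B2, of "S (max B1 B2)"] mono by simp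
    ultimately show ?case by auto
  qed simp
qed (auto elim: is_chain_mono)

lemma bounded_Ex_iff: "(\<forall>a<k. \<exists>b. Q a b) \<longleftrightarrow> (\<exists>B::nat. \<forall>a<(k::nat). \<exists>b<B. Q a b)"
proof
  assume "\<forall>a<k. \<exists>b. Q a b"
  then obtain g where g: "\<And>a. a < k \<Longrightarrow> Q a (g a)" by metis
  have "finite (g ` {..<k})" by simp
  then obtain B where "\<forall>b \<in> g ` {..<k}. b < B" unfolding finite_nat_set_iff_bounded by blast
  with g show "\<exists>B. \<forall>a<k. \<exists>b<B. Q a b" by auto
qed blast

definition approx_edge :: "(nat \<Rightarrow> bool) \<Rightarrow> nat \<Rightarrow> nat \<Rightarrow> nat \<Rightarrow> nat \<Rightarrow> bool" where
  "approx_edge P N k u z \<longleftrightarrow> z \<le> N \<and> (\<forall>a<k. \<exists>b. P \<langle>\<langle>u, z\<rangle>, \<langle>a, b\<rangle>\<rangle>)"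

definition bounded_edge :: "(nat \<Rightarrow> bool) \<Rightarrow> nat \<Rightarrow> nat \<Rightarrow> nat \<Rightarrow> nat \<Rightarrow> nat \<Rightarrow> bool" where
  "bounded_edge P N k B u z \<longleftrightarrow> z \<le> N \<and> (\<forall>a<k. \<exists>b<B. P \<langle>\<langle>u, z\<rangle>, \<langle>a, b\<rangle>\<rangle>)"

lemma rtranclp_approx_edge_iff:
  "(approx_edge P N k)\<^sup>*\<^sup>* u y \<longleftrightarrow> (\<exists>B zs. is_chain (bounded_edge P N k B) u zs \<and> last (u # zs) = y)"
proof -
  have approx_iff: "approx_edge P N k u z \<longleftrightarrow> (\<exists>B. bounded_edge P N k B u z)" for u z
    using bounded_Ex_iff[of k "\<lambda>a b. P \<langle>\<langle>u, z\<rangle>, \<langle>a, b\<rangle>\<rangle>"]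
    unfolding approx_edge_def bounded_edge_def by blast
  have approx: "approx_edge P N k = (\<lambda>u z. \<exists>B. bounded_edge P N k B u z)"
    by (intro ext) (rule approx_iff)
  have mono: "bounded_edge P N k B' u z" if "bounded_edge P N k B u z" "B \<le> B'" for B B' u z
    using that unfolding bounded_edge_def by force
  have "is_chain (\<lambda>u z. \<exists>B. bounded_edge P N k B u z) u zs
      \<longleftrightarrow> (\<exists>B. is_chain (bounded_edge P N k B) u zs)" for zs
    by (rule is_chain_Ex_mono) (rule mono)
  then show ?thesis unfolding rtranclp_iff_is_chain approx by blast
qed

lemma approx_edge_sound_at_some_level:
  assumes R: "\<And>u z. R u z \<longleftrightarrow> (\<forall>a. \<exists>b. P \<langle>\<langle>u, z\<rangle>, \<langle>a, b\<rangle>\<rangle>)"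
  shows "\<exists>K. \<forall>u\<le>N. \<forall>z. approx_edge P N K u z \<longrightarrow> R u z"
proof -
  define S where "S = {(u, z). u \<le> N \<and> z \<le> N \<and> \<not> R u z}"
  have "\<exists>a. \<forall>b. \<not> P \<langle>\<langle>u, z\<rangle>, \<langle>a, b\<rangle>\<rangle>" if "(u, z) \<in> S" for u z
    using that R unfolding S_def by blast
  then obtain g where g: "\<And>u z b. (u, z) \<in> S \<Longrightarrow> \<not> P \<langle>\<langle>u, z\<rangle>, \<langle>g u z, b\<rangle>\<rangle>" by metis
  have "finite S" unfolding S_def
    by (rule finite_subset[of _ "{..N} \<times> {..N}"]) auto
  then have "finite (case_prod g ` S)" by simp
  then obtain K where K: "\<forall>a \<in> case_prod g ` S. a < K" unfolding finite_nat_set_iff_bounded by blast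
  have "R u z" if "u \<le> N" "approx_edge P N K u z" for u z
  proof (rule ccontr)
    assume "\<not> R u z"
    with that have "(u, z) \<in> S" unfolding S_def approx_edge_def by simp
    with K that(2) g show False unfolding approx_edge_def by blast
  qed
  then show ?thesis by blast
qed

lemma rtranclp_approx_edge_eq_iff:
  assumes "equivp R" and R: "\<And>u z. R u z \<longleftrightarrow> (\<forall>a. \<exists>b. P \<langle>\<langle>u, z\<rangle>, \<langle>a, b\<rangle>\<rangle>)"
    and "x \<le> N" "x' \<le> N"
  shows "(\<forall>y k. (approx_edge P N k)\<^sup>*\<^sup>* x y \<longleftrightarrow> (approx_edge P N k)\<^sup>*\<^sup>* x' y) \<longleftrightarrow> R x x'"
proof
  assume "R x x'"
  then have "R x' x" using \<open>equivp R\<close> by (meson equivp_symp)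
  with \<open>R x x'\<close> have "approx_edge P N k x x'" "approx_edge P N k x' x" for k
    using \<open>x \<le> N\<close> \<open>x' \<le> N\<close> R unfolding approx_edge_def by auto
  then show "\<forall>y k. (approx_edge P N k)\<^sup>*\<^sup>* x y \<longleftrightarrow> (approx_edge P N k)\<^sup>*\<^sup>* x' y"
    by (meson converse_rtranclp_into_rtranclp)
next
  assume same: "\<forall>y k. (approx_edge P N k)\<^sup>*\<^sup>* x y \<longleftrightarrow> (approx_edge P N k)\<^sup>*\<^sup>* x' y"
  obtain K where K: "\<And>u z. u \<le> N \<Longrightarrow> approx_edge P N K u z \<Longrightarrow> R u z"
    using approx_edge_sound_at_some_level[OF R] by blast
  have "(approx_edge P N K)\<^sup>*\<^sup>* x' x" using same by blast
  then have "R x' x \<and> x \<le> N"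
  proof (induction rule: rtranclp_induct)
    case base
    show ?case using \<open>equivp R\<close> \<open>x' \<le> N\<close> by (simp add: equivp_reflp)
  next
    case (step u v)
    then have "R u v" "v \<le> N" using K unfolding approx_edge_def by auto
    with step.IH show ?case using \<open>equivp R\<close> by (meson equivp_transp)
  qed
  then show "R x x'" using \<open>equivp R\<close> by (meson equivp_symp)
qed

section \<open>The chain search\<close>

definition list_hd :: "nat \<Rightarrow> nat" where "list_hd l = cfst (l - 1)"
definition list_tl :: "nat \<Rightarrow> nat" where "list_tl l = csnd (l - 1)"
definition list_nth :: "nat \<Rightarrow> nat \<Rightarrow> nat" where "list_nth l i = list_hd ((list_tl ^^ i) l)"

lemma list_hd_Cons [simp]: "list_hd (Suc \<langle>x, l\<rangle>) = x"
  and list_tl_Cons [simp]: "list_tl (Suc \<langle>x, l\<rangle>) = l"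
  by (simp_all add: list_hd_def list_tl_def)

lemma list_nth_encode: "i < length xs \<Longrightarrow> list_nth (list_encode xs) i = xs ! i"
proof (induction xs arbitrary: i)
  case (Cons x xs)
  then show ?case by (cases i) (simp_all add: list_nth_def funpow_Suc_right del: funpow.simps)
qed simp

lemma length_le_list_encode: "length xs \<le> list_encode xs"
  by (induction xs) (auto intro: le_SucI order_trans[OF _ le_prod_encode_2])

lemma nth_le_list_encode: "i < length xs \<Longrightarrow> xs ! i \<le> list_encode xs"
proof (induction xs arbitrary: i)
  case (Cons x xs)
  then show ?case
    by (cases i) (auto intro: le_SucI le_prod_encode_1 order_trans[OF _ le_prod_encode_2])
qed simp

definition list_nth_prog :: recf where
  "list_nth_prog = Comp (Comp Fst pred_prog) (iterate_prog (Comp Snd pred_prog))"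

lemma computes_list_nth_prog: "computes list_nth_prog (\<lambda>w. list_nth (cfst w) (csnd w))"
  unfolding list_nth_prog_def list_nth_def list_hd_def list_tl_def[abs_def]
  by (rule computes_cong, (rule computes_iterate_prog computes_pred_prog computes_basic)+) simp

definition bounded_all_ex_prog :: "recf \<Rightarrow> recf" where
  "bounded_all_ex_prog p = not_prog (sum_prog (not_prog (Comp
      (sum_prog (Comp p (Pair (Comp Fst Fst) (Pair (Comp Snd Fst) Snd))))
      (Pair (Pair (Comp Fst Fst) Snd) (Comp Snd Fst)))))"

lemma computes_bounded_all_ex_prog:
  assumes "computes p (\<lambda>w. of_bool (P w))"
  shows "computes (bounded_all_ex_prog p)
    (\<lambda>w. of_bool (\<forall>a<csnd w. \<exists>b<csnd (cfst w). P \<langle>cfst (cfst w), \<langle>a, b\<rangle>\<rangle>))"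
  unfolding bounded_all_ex_prog_def
  by (rule computes_cong, (rule computes_not_prog computes_sum_prog computes_basic assms)+) auto

definition chain_step :: "(nat \<Rightarrow> bool) \<Rightarrow> nat \<Rightarrow> nat \<Rightarrow> nat \<Rightarrow> nat \<Rightarrow> nat" where
  "chain_step P N k B s = (let u = cfst s; l = cfst (csnd s); ok = csnd (csnd s) in
     if l = 0 then s
     else \<langle>list_hd l, \<langle>list_tl l, of_bool (ok \<noteq> 0 \<and> bounded_edge P N k B u (list_hd l))\<rangle>\<rangle>)"

lemma chain_step_iterate:
  assumes "length zs \<le> m"
  shows "(chain_step P N k B ^^ m) \<langle>u, \<langle>list_encode zs, of_bool b\<rangle>\<rangle>
    = \<langle>last (u # zs), \<langle>0, of_bool (b \<and> is_chain (bounded_edge P N k B) u zs)\<rangle>\<rangle>"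
  using assms
proof (induction zs arbitrary: u b m)
  case Nil
  have "chain_step P N k B \<langle>u, \<langle>0, of_bool b\<rangle>\<rangle> = \<langle>u, \<langle>0, of_bool b\<rangle>\<rangle>"
    by (simp add: chain_step_def)
  then have "(chain_step P N k B ^^ m) \<langle>u, \<langle>0, of_bool b\<rangle>\<rangle> = \<langle>u, \<langle>0, of_bool b\<rangle>\<rangle>"
    by (induction m) auto
  then show ?case by simp
next
  case (Cons z zs)
  then obtain m' where "m = Suc m'" "length zs \<le> m'" by (cases m) auto
  moreover have "chain_step P N k B \<langle>u, \<langle>list_encode (z # zs), of_bool b\<rangle>\<rangle>
      = \<langle>z, \<langle>list_encode zs, of_bool (b \<and> bounded_edge P N k B u z)\<rangle>\<rangle>"
    by (simp add: chain_step_def)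
  ultimately show ?case using Cons.IH by (simp add: funpow_Suc_right del: funpow.simps)
qed

definition chain_step_prog :: "recf \<Rightarrow> recf" where
  "chain_step_prog p = (let N = Comp Fst Fst; k = Comp Fst (Comp Snd Fst);
     B = Comp Snd (Comp Snd Fst); u = Comp Fst Snd; l = Comp Fst (Comp Snd Snd);
     ok = Comp Snd (Comp Snd Snd); z = Comp Fst (Comp pred_prog l) in
   if_zero_prog l Snd (Pair z (Pair (Comp Snd (Comp pred_prog l))
     (if_zero_prog ok Zero (if_zero_prog (minus_prog z N)
        (Comp (bounded_all_ex_prog p) (Pair (Pair (Pair u z) B) k)) Zero)))))"

lemma computes_chain_step_prog:
  assumes "computes p (\<lambda>w. of_bool (P w))"
  shows "computes (chain_step_prog p)
    (\<lambda>w. chain_step P (cfst (cfst w)) (cfst (csnd (cfst w))) (csnd (csnd (cfst w))) (csnd w))"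
  unfolding chain_step_prog_def Let_def
  by (rule computes_cong, (rule computes_if_zero_prog computes_minus_prog computes_pred_prog
      computes_bounded_all_ex_prog computes_basic assms)+)
    (simp add: chain_step_def bounded_edge_def list_hd_def list_tl_def Let_def)

text \<open>Inputs have the form \<langle>\<langle>\<langle>i, L\<rangle>, \<langle>y, k\<rangle>\<rangle>, \<langle>zs, B\<rangle>\<rangle>, where L codes the tuple (and bounds
  its entries) and zs codes the chain. A list is no longer than its code, so zs iterations of
  chain_step traverse it.\<close>

definition chain_accepts :: "(nat \<Rightarrow> bool) \<Rightarrow> nat \<Rightarrow> bool" where
  "chain_accepts P w \<longleftrightarrow> (let c = cfst (cfst w); x = csnd (cfst w); t = csnd w; L = csnd c;
     s = (chain_step P L (csnd x) (csnd t) ^^ cfst t) \<langle>list_nth L (cfst c), \<langle>cfst t, 1\<rangle>\<rangle>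
   in csnd (csnd s) \<noteq> 0 \<and> cfst s = cfst x)"

lemma ex_chain_accepts_iff:
  "(\<exists>t. chain_accepts P \<langle>\<langle>\<langle>i, L\<rangle>, \<langle>y, k\<rangle>\<rangle>, t\<rangle>) \<longleftrightarrow> (approx_edge P L k)\<^sup>*\<^sup>* (list_nth L i) y"
proof -
  let ?u = "list_nth L i"
  have accepts: "chain_accepts P \<langle>\<langle>\<langle>i, L\<rangle>, \<langle>y, k\<rangle>\<rangle>, \<langle>list_encode zs, B\<rangle>\<rangle>
      \<longleftrightarrow> is_chain (bounded_edge P L k B) ?u zs \<and> last (?u # zs) = y" for zs B
    using chain_step_iterate[OF length_le_list_encode, of zs P L k B ?u True]
    by (simp add: chain_accepts_def)
  have "(\<exists>t. chain_accepts P \<langle>\<langle>\<langle>i, L\<rangle>, \<langle>y, k\<rangle>\<rangle>, t\<rangle>)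
      \<longleftrightarrow> (\<exists>B zs. chain_accepts P \<langle>\<langle>\<langle>i, L\<rangle>, \<langle>y, k\<rangle>\<rangle>, \<langle>list_encode zs, B\<rangle>\<rangle>)"
  proof
    assume "\<exists>t. chain_accepts P \<langle>\<langle>\<langle>i, L\<rangle>, \<langle>y, k\<rangle>\<rangle>, t\<rangle>"
    then obtain t where "chain_accepts P \<langle>\<langle>\<langle>i, L\<rangle>, \<langle>y, k\<rangle>\<rangle>, t\<rangle>" by blast
    moreover have "t = \<langle>list_encode (list_decode (cfst t)), csnd t\<rangle>" by simp
    ultimately show "\<exists>B zs. chain_accepts P \<langle>\<langle>\<langle>i, L\<rangle>, \<langle>y, k\<rangle>\<rangle>, \<langle>list_encode zs, B\<rangle>\<rangle>"
      by metis
  qed blast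
  then show ?thesis unfolding accepts rtranclp_approx_edge_iff by blast
qed

definition chain_search_prog :: "recf \<Rightarrow> recf" where
  "chain_search_prog p = (let c = Comp Fst Fst; x = Comp Snd Fst; t = Snd; L = Comp Snd c;
     s = Comp (param_iterate_prog (chain_step_prog p))
       (Pair (Pair (Pair L (Pair (Comp Snd x) (Comp Snd t)))
                   (Pair (Comp list_nth_prog (Pair L (Comp Fst c))) (Pair (Comp Fst t) (const_prog 1))))
             (Comp Fst t))
   in if_zero_prog (Comp Snd (Comp Snd s)) (const_prog 1) (not_prog (eq_prog (Comp Fst s) (Comp Fst x))))"

lemma computes_chain_search_prog:
  assumes "computes p (\<lambda>w. of_bool (P w))"
  shows "computes (chain_search_prog p) (\<lambda>w. of_bool (\<not> chain_accepts P w))"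
  unfolding chain_search_prog_def Let_def
  by (rule computes_cong, (rule computes_if_zero_prog computes_not_prog computes_eq_prog
      computes_param_iterate_prog computes_chain_step_prog computes_list_nth_prog
      computes_basic assms)+)
    (simp add: chain_accepts_def Let_def)

lemma W_chain_search:
  assumes "computes p (\<lambda>w. of_bool (P w))" and "i < length xs"
  shows "W (smn_index (Mu (chain_search_prog p)) \<langle>i, list_encode xs\<rangle>)
    = {x. (approx_edge P (list_encode xs) (csnd x))\<^sup>*\<^sup>* (xs ! i) (cfst x)}"
proof -
  have "(\<exists>t. chain_accepts P \<langle>\<langle>\<langle>i, list_encode xs\<rangle>, x\<rangle>, t\<rangle>)
      \<longleftrightarrow> (approx_edge P (list_encode xs) (csnd x))\<^sup>*\<^sup>* (xs ! i) (cfst x)" for x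
    using ex_chain_accepts_iff[of P i "list_encode xs" "cfst x" "csnd x"]
    by (simp add: list_nth_encode[OF assms(2)])
  then show ?thesis
    unfolding W_smn_index eval_Mu_defined_iff[OF computes_chain_search_prog[OF assms(1)]]
    by simp
qed

lemma decidable_predE:
  assumes "decidable_pred P"
  obtains p where "computes p (\<lambda>w. of_bool (P w))"
  using assms unfolding decidable_pred_def computes_def phi_def of_bool_def by blast

lemma computable3_smn_index: "computable3 (\<lambda>n i xs. smn_index U \<langle>i, list_encode xs\<rangle>)"
  unfolding computable3_def
proof (intro exI allI)
  fix n i xs
  have "computes (Comp (smn_prog U) Snd) (\<lambda>w. smn_index U (csnd w))"
    by (rule computes_Comp[OF computes_smn_prog computes_Snd])
  then have "eval (Comp (smn_prog U) Snd) \<langle>n, \<langle>i, list_encode xs\<rangle>\<rangle>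
      (smn_index U (csnd \<langle>n, \<langle>i, list_encode xs\<rangle>\<rangle>))"
    unfolding computes_def by blast
  then show "phi (encode (Comp (smn_prog U) Snd)) \<langle>n, \<langle>i, list_encode xs\<rangle>\<rangle>
      (smn_index U \<langle>i, list_encode xs\<rangle>)"
    unfolding phi_def decode_encode by simp
qed

lemma ceq_chain_search_iff:
  assumes "equivp R" and R: "\<And>u z. R u z \<longleftrightarrow> (\<forall>a. \<exists>b. P \<langle>\<langle>u, z\<rangle>, \<langle>a, b\<rangle>\<rangle>)"
    and p: "computes p (\<lambda>w. of_bool (P w))" and "i < length xs" "j < length xs"
  defines "U \<equiv> Mu (chain_search_prog p)"
  shows "ceq (smn_index U \<langle>i, list_encode xs\<rangle>) (smn_index U \<langle>j, list_encode xs\<rangle>)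
    \<longleftrightarrow> R (xs ! i) (xs ! j)"
proof -
  let ?reach = "\<lambda>u y k. (approx_edge P (list_encode xs) k)\<^sup>*\<^sup>* u y"
  have "ceq (smn_index U \<langle>i, list_encode xs\<rangle>) (smn_index U \<langle>j, list_encode xs\<rangle>)
      \<longleftrightarrow> (\<forall>y k. ?reach (xs ! i) y k \<longleftrightarrow> ?reach (xs ! j) y k)"
    unfolding ceq_def U_def W_chain_search[OF p \<open>i < length xs\<close>]
      W_chain_search[OF p \<open>j < length xs\<close>]
    by (rule Collect_cpair_eq_iff)
  also have "\<dots> \<longleftrightarrow> R (xs ! i) (xs ! j)"
    by (rule rtranclp_approx_edge_eq_iff[OF \<open>equivp R\<close> R
        nth_le_list_encode[OF \<open>i < length xs\<close>] nth_le_list_encode[OF \<open>j < length xs\<close>]])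
  finally show ?thesis .
qed

theorem theorem3p4:
  fixes R :: "nat \<Rightarrow> nat \<Rightarrow> bool"
  assumes "equivp R" and "pi02 R"
  shows "finitarily_reducible R ceq"
proof -
  from \<open>pi02 R\<close> obtain P where P: "decidable_pred P"
    and R: "\<And>x y. R x y \<longleftrightarrow> (\<forall>a. \<exists>b. P \<langle>\<langle>x, y\<rangle>, \<langle>a, b\<rangle>\<rangle>)"
    unfolding pi02_def by blast
  obtain p where p: "computes p (\<lambda>w. of_bool (P w))"
    using P by (rule decidable_predE)
  let ?f = "\<lambda>n i xs. smn_index (Mu (chain_search_prog p)) \<langle>i, list_encode xs\<rangle>"
  have "R (xs ! i) (xs ! j) \<longleftrightarrow> ceq (?f n i xs) (?f n j xs)"
    if "i < length xs" "j < length xs" for n i j xs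
    using ceq_chain_search_iff[OF \<open>equivp R\<close> R p that] by simp
  with computable3_smn_index show ?thesis
    unfolding finitarily_reducible_def by (intro exI[of _ ?f]) auto
qed

end
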